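(* Let $B$ be an admissible Banach sequence space, $X$ a Banach space, $\|\cdot\|_m$ ($m\in\mathbb Z$) norms on $X$ each equivalent to the norm of $X$, and $(A_m)_{m\in\mathbb Z}$ a sequence of bounded linear operators on $X$. If the operator $T_B\colon\mathcal D(T_B)\to Y_B$ is bijective, then $(A_m)_{m\in\mathbb Z}$ admits an exponential dichotomy with respect to the sequence of norms $\|\cdot\|_m$.
   Context: Banach sequence spaces: let $\mathcal S$ be the set of real sequences $(s_n)_{n\in\mathbb Z}$. A linear subspace $B\subset\mathcal S$ with norm $\|\cdot\|_B$ is a normed sequence space if $\mathbf{s}'\in B$ and $|s_n|\le|s'_n|$ for all $n$ imply $\mathbf{s}\in B$ and $\|\mathbf{s}\|_B\le\|\mathbf{s}'\|_B$; it is a Banach sequence space if complete. It is admissible if (i) $\chi_{\{n\}}\in B$ and $\|\chi_{\{n\}}\|_B>0$ for all $n\in\mathbb Z$; (ii) for all $\mathbf{s}\in B$, $m\in\mathbb Z$ the shift $(s_{n+m})_n$ is in $B$ with norm at most $N\|\mathbf{s}\|_B$ for a fixed $N>0$. $Y_B$ is the space of sequences $\mathbf{x}=(x_n)_{n\in\mathbb Z}$ in $X$ with $(\|x_n\|_n)_n\in B$, normed by $\|\mathbf{x}\|_{Y_B}=\|(\|x_n\|_n)_n\|_B$. $T_B$ is defined by $(T_B\mathbf{x})_n=x_n-A_{n-1}x_{n-1}$ on the domain $\mathcal D(T_B)=\{\mathbf{x}\in Y_B: T_B\mathbf{x}\in Y_B\}$. Set $\mathcal A(n,m)=A_{n-1}\cdots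 A_m$ for $n>m$ and $\mathcal A(m,m)=\mathrm{Id}$. The sequence $(A_m)$ admits an exponential dichotomy with respect to the norms $\|\cdot\|_m$ if: (1) there are projections $P_m\colon X\to X$ with $A_mP_m=P_{m+1}A_m$ for all $m$, such that each $A_m|_{\ker P_m}\colon\ker P_m\to\ker P_{m+1}$ is invertible; (2) there are constants $D>0$ and $0<\lambda<1<\mu$ such that for all $x\in X$, $\|\mathcal A(n,m)P_mx\|_n\le D\lambda^{n-m}\|x\|_m$ for $n\ge m$, and $\|\mathcal A(n,m)Q_mx\|_n\le D\mu^{n-m}\|x\|_m$ for $n\le m$, where $Q_m=\mathrm{Id}-P_m$ and, for $n<m$, $\mathcal A(n,m)=(\mathcal A(m,n)|_{\ker P_n})^{-1}\colon\ker P_m\to\ker P_n$. *)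

theory Defs
  imports "HOL-Analysis.Analysis"
begin

definition normed_seq_space :: "(int \<Rightarrow> real) set \<Rightarrow> ((int \<Rightarrow> real) \<Rightarrow> real) \<Rightarrow> bool" where
  "normed_seq_space Bs nB \<longleftrightarrow>
     (\<lambda>n. 0) \<in> Bs \<and>
     (\<forall>s\<in>Bs. \<forall>t\<in>Bs. (\<lambda>n. s n + t n) \<in> Bs) \<and>
     (\<forall>s\<in>Bs. \<forall>c::real. (\<lambda>n. c * s n) \<in> Bs) \<and>
     (\<forall>s\<in>Bs. nB s = 0 \<longleftrightarrow> s = (\<lambda>n. 0)) \<and>
     (\<forall>s\<in>Bs. \<forall>c::real. nB (\<lambda>n. c * s n) = \<bar>c\<bar> * nB s) \<and>
     (\<forall>s\<in>Bs. \<forall>t\<in>Bs. nB (\<lambda>n. s n + t n) \<le> nB s + nB t) \<and>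
     (\<forall>s s'. s' \<in> Bs \<and> (\<forall>n. \<bar>s n\<bar> \<le> \<bar>s' n\<bar>) \<longrightarrow> s \<in> Bs \<and> nB s \<le> nB s')"

definition banach_seq_space :: "(int \<Rightarrow> real) set \<Rightarrow> ((int \<Rightarrow> real) \<Rightarrow> real) \<Rightarrow> bool" where
  "banach_seq_space Bs nB \<longleftrightarrow> normed_seq_space Bs nB \<and>
     (\<forall>f :: nat \<Rightarrow> int \<Rightarrow> real. (\<forall>k. f k \<in> Bs) \<and>
        (\<forall>e>0. \<exists>K. \<forall>k\<ge>K. \<forall>l\<ge>K. nB (\<lambda>n. f k n - f l n) < e)
        \<longrightarrow> (\<exists>s\<in>Bs. (\<lambda>k. nB (\<lambda>n. f k n - s n)) \<longlonglongrightarrow> 0))"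

definition admissible :: "(int \<Rightarrow> real) set \<Rightarrow> ((int \<Rightarrow> real) \<Rightarrow> real) \<Rightarrow> bool" where
  "admissible Bs nB \<longleftrightarrow>
     (\<forall>n. indicator {n} \<in> Bs \<and> nB (indicator {n}) > 0) \<and>
     (\<exists>N>0. \<forall>s\<in>Bs. \<forall>m::int. (\<lambda>n. s (n + m)) \<in> Bs \<and> nB (\<lambda>n. s (n + m)) \<le> N * nB s)"

definition is_norm :: "('a::real_vector \<Rightarrow> real) \<Rightarrow> bool" where
  "is_norm nr \<longleftrightarrow> (\<forall>x y. nr (x + y) \<le> nr x + nr y) \<and>
     (\<forall>c x. nr (c *\<^sub>R x) = \<bar>c\<bar> * nr x) \<and> (\<forall>x. nr x = 0 \<longleftrightarrow> x = 0)"

definition equiv_to_norm :: "('a::real_normed_vector \<Rightarrow> real) \<Rightarrow> bool" where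
  "equiv_to_norm nr \<longleftrightarrow> (\<exists>a>0. \<exists>b>0. \<forall>x. a * norm x \<le> nr x \<and> nr x \<le> b * norm x)"

definition Y_B :: "(int \<Rightarrow> real) set \<Rightarrow> (int \<Rightarrow> 'a \<Rightarrow> real) \<Rightarrow> (int \<Rightarrow> 'a) set" where
  "Y_B Bs nr = {x. (\<lambda>n. nr n (x n)) \<in> Bs}"

definition Y_B_norm :: "((int \<Rightarrow> real) \<Rightarrow> real) \<Rightarrow> (int \<Rightarrow> 'a \<Rightarrow> real) \<Rightarrow> (int \<Rightarrow> 'a) \<Rightarrow> real" where
  "Y_B_norm nB nr x = nB (\<lambda>n. nr n (x n))"

definition T_B :: "(int \<Rightarrow> 'a \<Rightarrow> 'a::real_vector) \<Rightarrow> (int \<Rightarrow> 'a) \<Rightarrow> (int \<Rightarrow> 'a)" where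
  "T_B A x = (\<lambda>n. x n - A (n - 1) (x (n - 1)))"

definition dom_T_B :: "(int \<Rightarrow> real) set \<Rightarrow> (int \<Rightarrow> 'a \<Rightarrow> real) \<Rightarrow> (int \<Rightarrow> 'a \<Rightarrow> 'a::real_vector) \<Rightarrow> (int \<Rightarrow> 'a) set" where
  "dom_T_B Bs nr A = {x \<in> Y_B Bs nr. T_B A x \<in> Y_B Bs nr}"

text \<open>Cocycle: cocycle A m k = A(m+k-1) o ... o A m, i.e. \<A>(m+k, m).\<close>
fun cocycle :: "(int \<Rightarrow> 'a \<Rightarrow> 'a) \<Rightarrow> int \<Rightarrow> nat \<Rightarrow> 'a \<Rightarrow> 'a" where
  "cocycle A m 0 = id"
| "cocycle A m (Suc k) = A (m + int k) \<circ> cocycle A m k"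

definition evol :: "(int \<Rightarrow> 'a \<Rightarrow> 'a) \<Rightarrow> int \<Rightarrow> int \<Rightarrow> 'a \<Rightarrow> 'a" where
  "evol A n m = cocycle A m (nat (n - m))"

definition exp_dichotomy :: "(int \<Rightarrow> 'a \<Rightarrow> 'a::real_normed_vector) \<Rightarrow> (int \<Rightarrow> 'a \<Rightarrow> real) \<Rightarrow> bool" where
  "exp_dichotomy A nr \<longleftrightarrow>
    (\<exists>P :: int \<Rightarrow> 'a \<Rightarrow> 'a.
       (\<forall>m. bounded_linear (P m) \<and> P m \<circ> P m = P m) \<and>
       (\<forall>m. A m \<circ> P m = P (m + 1) \<circ> A m) \<and>
       (\<forall>m. bij_betw (A m) {x. P m x = 0} {x. P (m + 1) x = 0}) \<and>
       (\<exists>D>0. \<exists>la mu::real. 0 < la \<and> la < 1 \<and> 1 < mu \<and>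
          (\<forall>n m x. n \<ge> m \<longrightarrow>
             nr n (evol A n m (P m x)) \<le> D * la ^ nat (n - m) * nr m x) \<and>
          (\<forall>n m x. n \<le> m \<longrightarrow>
             nr n (the_inv_into {y. P n y = 0} (evol A m n) (x - P m x))
               \<le> D * mu powi (n - m) * nr m x)))"

end

theory Submission imports Defs begin

text \<open>
  Since \<open>T_B\<close> is closed and \<open>Y_B\<close> is complete, the Baire category argument of the open
  mapping theorem makes its inverse bounded: \<open>\<parallel>x\<parallel> \<le> K \<parallel>T_B x\<parallel>\<close>.
  The projection \<open>P_m v\<close> is the value at time \<open>m\<close> of the solution of \<open>T_B x = \<delta>\<^sub>m v\<close>; for
  \<open>n \<ge> m\<close> this solution is the forward orbit of \<open>P_m v\<close>, and \<open>\<delta>\<^sub>m v - x\<close> is, for \<open>n \<le> m\<close>,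
  a backward orbit ending in \<open>v - P_m v\<close>. The bounded inverse makes these orbits uniformly
  bounded and quasi-monotone. Exponential decay follows from Perron's ramp trick: multiplying
  an orbit by a ramp that rises over \<open>L\<close> steps and then stays at height \<open>L\<close> gives a sequence
  whose image under \<open>T_B\<close> is the orbit cut down to the rise. Comparing norms, with the shift
  invariance of \<open>B\<close> relating the two windows, gives \<open>L a(k + 2L) \<le> const \<cdot> a(k)\<close>, so for large
  \<open>L\<close> the orbit norms halve every \<open>2L\<close> steps.
\<close>

section \<open>Geometric decay and complete metric spaces\<close>

lemma halving_exponential_decay:
  fixes a :: "nat \<Rightarrow> real"
  assumes "0 < p" "0 \<le> C" and nonneg: "\<And>n. 0 \<le> a n"
    and half: "\<And>n. a (n + p) \<le> a n / 2" and quasi_mono: "\<And>n i. a (n + i) \<le> C * a n"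
  shows "a n \<le> 2 * C * root p (1/2) ^ n * a 0"
proof -
  define r where "r = root p (1/2)"
  have r: "0 < r" "r < 1" "r ^ p = 1/2"
    using \<open>0 < p\<close> by (auto simp: r_def real_root_gt_zero)
  have periods: "a (p * q) \<le> a 0 * (1/2) ^ q" for q
  proof (induction q)
    case (Suc q)
    have "a (p * Suc q) \<le> a (p * q) / 2" using half[of "p * q"] by (simp add: add.commute)
    with Suc show ?case by simp
  qed simp
  have "(1/2) ^ (n div p) * (1/2) \<le> (1/2) ^ (n div p) * r ^ (n mod p)"
    using power_decreasing[of "n mod p" p r] r \<open>0 < p\<close> by (intro mult_left_mono) auto
  also have "\<dots> = (r ^ p) ^ (n div p) * r ^ (n mod p)"
    by (simp only: r(3))
  also have "\<dots> = r ^ n"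
    by (simp only: power_mult[symmetric] power_add[symmetric] mult_div_mod_eq)
  finally have root_bound: "(1/2::real) ^ (n div p) \<le> 2 * r ^ n" by simp
  have "a n \<le> C * a (p * (n div p))"
    using quasi_mono[of "p * (n div p)" "n mod p"] by (simp add: mult.commute)
  also have "\<dots> \<le> C * (a 0 * (2 * r ^ n))"
    using order_trans[OF periods mult_left_mono[OF root_bound nonneg]] \<open>0 \<le> C\<close>
    by (rule mult_left_mono)
  finally show ?thesis by (simp add: r_def ac_simps)
qed

lemma (in Metric_space) MCauchy_fast_subsequence:
  assumes "MCauchy f"
  obtains r where "strict_mono r" "\<And>i. d (f (r (Suc i))) (f (r i)) < (1/2) ^ i"
proof -
  have "\<forall>i. \<exists>K. \<forall>p\<ge>K. \<forall>q\<ge>K. d (f p) (f q) < (1/2::real) ^ i"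
    using assms by (simp add: MCauchy_def)
  then obtain K where K: "\<And>i p q. K i \<le> p \<Longrightarrow> K i \<le> q \<Longrightarrow> d (f p) (f q) < (1/2) ^ i"
    by metis
  define r where "r i = (\<Sum>l\<le>i. K l) + i" for i
  have K_le_r: "K i \<le> r i'" if "i \<le> i'" for i i'
    using that member_le_sum[of i "{..i'}" K] by (simp add: r_def)
  have "strict_mono r"
    by (rule strict_mono_Suc_iff[THEN iffD2]) (simp add: r_def)
  moreover have "d (f (r (Suc i))) (f (r i)) < (1/2) ^ i" for i
    by (intro K K_le_r) simp_all
  ultimately show ?thesis using that by blast
qed

lemma (in Metric_space) mdist_geometric_tail:
  assumes mem: "\<And>i. f i \<in> M" and step: "\<And>i. d (f (Suc i)) (f i) \<le> c * (1/2) ^ i"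
    and "m \<le> n"
  shows "d (f n) (f m) \<le> 2 * c * (1/2) ^ m"
proof -
  have "d (f n) (f m) \<le> 2 * c * (1/2) ^ m - 2 * c * (1/2) ^ n"
    using \<open>m \<le> n\<close>
  proof (induction n rule: dec_induct)
    case (step n)
    have "d (f (Suc n)) (f m) \<le> d (f (Suc n)) (f n) + d (f n) (f m)"
      by (rule triangle) (rule mem)+
    with step.IH assms(2)[of n] show ?case by simp
  qed (simp add: mem)
  moreover have "0 \<le> c" using order_trans[OF nonneg step[of 0]] by simp
  then have "0 \<le> 2 * c * (1/2::real) ^ n" by simp
  ultimately show ?thesis by linarith
qed

lemma (in Metric_space) MCauchy_geometric:
  assumes mem: "\<And>i. f i \<in> M" and step: "\<And>i. d (f (Suc i)) (f i) \<le> c * (1/2) ^ i"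
  shows "MCauchy f"
proof -
  have "\<exists>N. \<forall>n n'. N \<le> n \<longrightarrow> N \<le> n' \<longrightarrow> d (f n) (f n') < e" if "e > 0" for e
  proof -
    obtain N where N: "(1/2::real) ^ N < e / (2 * \<bar>c\<bar> + 1)"
      using real_arch_pow_inv[of "e / (2 * \<bar>c\<bar> + 1)" "1/2"] \<open>e > 0\<close> by auto
    have "d (f n) (f n') < e" if "N \<le> n" "n \<le> n'" for n n'
    proof -
      have "(2 * \<bar>c\<bar> + 1) * (1/2::real) ^ n \<le> (2 * \<bar>c\<bar> + 1) * (1/2) ^ N"
        using that by (intro mult_left_mono power_decreasing) auto
      also have "\<dots> < e" using N by (simp add: pos_less_divide_eq mult.commute)
      finally have "(2 * \<bar>c\<bar> + 1) * (1/2::real) ^ n < e" .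
      moreover have "2 * c * (1/2::real) ^ n \<le> (2 * \<bar>c\<bar> + 1) * (1/2) ^ n"
        by (intro mult_right_mono) auto
      ultimately show ?thesis
        using mdist_geometric_tail[OF mem step \<open>n \<le> n'\<close>] commute[of "f n" "f n'"] by linarith
    qed
    then show ?thesis using commute by (metis nle_le)
  qed
  then show ?thesis using mem by (auto simp: MCauchy_def)
qed

lemma (in Metric_space) mcomplete_Baire_cover:
  assumes "mcomplete" "M \<noteq> {}" "M \<subseteq> (\<Union>k::nat. F k)"
  obtains k x r where "x \<in> M" "r > 0" "mball x r \<subseteq> mtopology closure_of F k"
proof -
  have "\<exists>k. mtopology interior_of (mtopology closure_of F k) \<noteq> {}"
  proof (rule ccontr)
    assume "\<not> ?thesis"
    then have "mtopology interior_of \<Union>(range (\<lambda>k. mtopology closure_of F k)) = {}"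
      by (intro metric_Baire_category_alt \<open>mcomplete\<close>) (auto simp: closedin_closure_of)
    moreover have "(\<Union>k. mtopology closure_of F k) = M"
    proof
      show "(\<Union>k. mtopology closure_of F k) \<subseteq> M"
        using closure_of_subset_topspace[of mtopology] by auto
      show "M \<subseteq> (\<Union>k. mtopology closure_of F k)"
      proof
        fix x assume "x \<in> M"
        moreover obtain k where "x \<in> F k" using assms(3) \<open>x \<in> M\<close> by blast
        ultimately have "x \<in> mtopology closure_of F k"
          using closure_of_subset_Int[of mtopology "F k"] by auto
        then show "x \<in> (\<Union>k. mtopology closure_of F k)" by blast
      qed
    qed
    ultimately show False
      using assms(2) interior_of_topspace[of mtopology] by simp
  qed
  then show ?thesis
    using that by (auto simp: in_interior_of_mball)
qed

section \<open>Normed spaces of functions\<close>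

locale function_normed_space =
  fixes V :: "('i \<Rightarrow> 'b::real_normed_vector) set" and nv :: "('i \<Rightarrow> 'b) \<Rightarrow> real"
  assumes zero_mem: "(\<lambda>n. 0) \<in> V"
    and add_mem: "x \<in> V \<Longrightarrow> y \<in> V \<Longrightarrow> (\<lambda>n. x n + y n) \<in> V"
    and scale_mem: "x \<in> V \<Longrightarrow> (\<lambda>n. c *\<^sub>R x n) \<in> V"
    and norm_eq_zero: "x \<in> V \<Longrightarrow> nv x = 0 \<longleftrightarrow> x = (\<lambda>n. 0)"
    and norm_scale: "x \<in> V \<Longrightarrow> nv (\<lambda>n. c *\<^sub>R x n) = \<bar>c\<bar> * nv x"
    and norm_triangle: "x \<in> V \<Longrightarrow> y \<in> V \<Longrightarrow> nv (\<lambda>n. x n + y n) \<le> nv x + nv y"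
begin

lemma norm_zero [simp]: "nv (\<lambda>n. 0) = 0"
  using norm_eq_zero[OF zero_mem] by simp

lemma minus_mem: "x \<in> V \<Longrightarrow> (\<lambda>n. - x n) \<in> V"
  using scale_mem[of x "-1"] by simp

lemma norm_minus: "x \<in> V \<Longrightarrow> nv (\<lambda>n. - x n) = nv x"
  using norm_scale[of x "-1"] by simp

lemma diff_mem: "x \<in> V \<Longrightarrow> y \<in> V \<Longrightarrow> (\<lambda>n. x n - y n) \<in> V"
  using add_mem[OF _ minus_mem, of x y] by simp

lemma norm_triangle_diff: "x \<in> V \<Longrightarrow> y \<in> V \<Longrightarrow> nv (\<lambda>n. x n - y n) \<le> nv x + nv y"
  using norm_triangle[OF _ minus_mem, of x y] norm_minus[of y] by simp

lemma norm_nonneg: "x \<in> V \<Longrightarrow> 0 \<le> nv x"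
  using norm_triangle_diff[of x x] by simp

lemma norm_diff_commute: "x \<in> V \<Longrightarrow> y \<in> V \<Longrightarrow> nv (\<lambda>n. x n - y n) = nv (\<lambda>n. y n - x n)"
  using norm_minus[OF diff_mem, of y x] by simp

lemma sum_mem: "finite I \<Longrightarrow> (\<And>i. i \<in> I \<Longrightarrow> f i \<in> V) \<Longrightarrow> (\<lambda>n. \<Sum>i\<in>I. f i n) \<in> V"
  by (induction I rule: finite_induct) (auto simp: zero_mem add_mem)

definition vdist :: "('i \<Rightarrow> 'b) \<Rightarrow> ('i \<Rightarrow> 'b) \<Rightarrow> real" where
  "vdist x y = (if x \<in> V \<and> y \<in> V then nv (\<lambda>n. x n - y n) else 0)"

sublocale Metric_space V vdist
proof
  show "0 \<le> vdist x y" for x y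
    unfolding vdist_def using norm_nonneg[OF diff_mem] by auto
  show "vdist x y = vdist y x" for x y
    unfolding vdist_def using norm_diff_commute by auto
  show "vdist x y = 0 \<longleftrightarrow> x = y" if "x \<in> V" "y \<in> V" for x y
    using that norm_eq_zero[OF diff_mem[OF that]] by (auto simp: vdist_def fun_eq_iff)
  show "vdist x z \<le> vdist x y + vdist y z" if "x \<in> V" "y \<in> V" "z \<in> V" for x y z
    using that norm_triangle[OF diff_mem diff_mem, of x y y z] by (simp add: vdist_def)
qed

context
  fixes j and c :: real
  assumes coordinate_bound: "\<And>x. x \<in> V \<Longrightarrow> norm (x j) \<le> c * nv x"
begin

lemma dist_coordinate_le: "x \<in> V \<Longrightarrow> y \<in> V \<Longrightarrow> dist (x j) (y j) \<le> c * vdist x y"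
  using coordinate_bound[OF diff_mem] by (simp add: dist_norm vdist_def)

lemma limitin_coordinate:
  assumes "limitin mtopology f x sequentially" shows "(\<lambda>k. f k j) \<longlonglongrightarrow> x j"
proof -
  have x: "x \<in> V" and lim: "(\<lambda>k. vdist (f k) x) \<longlonglongrightarrow> 0"
    and ev: "\<forall>\<^sub>F k in sequentially. f k \<in> V"
    using assms by (auto simp: limitin_metric_dist_null)
  from ev have "\<forall>\<^sub>F k in sequentially. norm (f k j - x j) \<le> c * vdist (f k) x"
    by eventually_elim (metis dist_coordinate_le dist_norm x)
  moreover have "(\<lambda>k. c * vdist (f k) x) \<longlonglongrightarrow> 0"
    using lim by (rule tendsto_mult_right_zero)
  ultimately have "(\<lambda>k. f k j - x j) \<longlonglongrightarrow> 0"
    by (rule Lim_null_comparison)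
  then show ?thesis by (simp add: LIM_zero_iff)
qed

lemma MCauchy_coordinate:
  assumes "MCauchy f" shows "Cauchy (\<lambda>k. f k j)"
proof (rule metric_CauchyI)
  fix e :: real assume "e > 0"
  have mem: "\<And>k. f k \<in> V" using assms by (auto simp: MCauchy_def)
  have "e / (\<bar>c\<bar> + 1) > 0" using \<open>e > 0\<close> by (simp add: add_pos_nonneg)
  then obtain K where K: "\<And>p q. K \<le> p \<Longrightarrow> K \<le> q \<Longrightarrow> vdist (f p) (f q) < e / (\<bar>c\<bar> + 1)"
    using assms unfolding MCauchy_def by meson
  have "dist (f p j) (f q j) < e" if "K \<le> p" "K \<le> q" for p q
  proof -
    have "dist (f p j) (f q j) \<le> (\<bar>c\<bar> + 1) * vdist (f p) (f q)"
      using dist_coordinate_le[OF mem mem, of p q] nonneg[of "f p" "f q"]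
      by (smt (verit) mult_right_mono)
    also have "\<dots> < e" using K[OF that] by (simp add: field_simps add_pos_nonneg)
    finally show ?thesis .
  qed
  then show "\<exists>K. \<forall>p\<ge>K. \<forall>q\<ge>K. dist (f p j) (f q j) < e" by blast
qed

end

end

section \<open>Admissible sequence spaces and the space \<open>Y_B\<close>\<close>

locale admissible_seq_space =
  fixes Bs :: "(int \<Rightarrow> real) set" and nB :: "(int \<Rightarrow> real) \<Rightarrow> real" and N :: real
  assumes banach: "banach_seq_space Bs nB"
    and indicator_mem: "indicator {n} \<in> Bs" and indicator_pos: "nB (indicator {n}) > 0"
    and N_pos: "N > 0"
    and shift: "s \<in> Bs \<Longrightarrow> (\<lambda>n. s (n + m)) \<in> Bs \<and> nB (\<lambda>n. s (n + m)) \<le> N * nB s"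
begin

lemma B_normed: "normed_seq_space Bs nB"
  using banach by (simp add: banach_seq_space_def)

sublocale B: function_normed_space Bs nB
  using B_normed by unfold_locales (simp_all add: normed_seq_space_def)

lemma B_dominated: "t \<in> Bs \<Longrightarrow> (\<And>n. \<bar>s n\<bar> \<le> \<bar>t n\<bar>) \<Longrightarrow> s \<in> Bs \<and> nB s \<le> nB t"
  using B_normed unfolding normed_seq_space_def by blast

lemma B_mcomplete: "B.mcomplete"
  unfolding B.mcomplete_def
proof (intro allI impI)
  fix f assume f: "B.MCauchy f"
  then have mem: "\<And>k. f k \<in> Bs" by (auto simp: B.MCauchy_def)
  with f have "\<forall>e>0. \<exists>K. \<forall>k\<ge>K. \<forall>l\<ge>K. nB (\<lambda>n. f k n - f l n) < e"
    by (simp add: B.MCauchy_def B.vdist_def)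
  then obtain s where "s \<in> Bs" "(\<lambda>k. nB (\<lambda>n. f k n - s n)) \<longlonglongrightarrow> 0"
    using banach mem unfolding banach_seq_space_def by blast
  with mem show "\<exists>s. limitin B.mtopology f s sequentially"
    by (auto simp: B.limitin_metric_dist_null B.vdist_def)
qed

text \<open>By shift invariance \<open>\<parallel>\<chi>\<^bsub>{j}\<^esub>\<parallel> \<ge> \<parallel>\<chi>\<^bsub>{0}\<^esub>\<parallel> / N\<close>, so this constant bounds the evaluation
  at any coordinate.\<close>

definition coord_const :: real where
  "coord_const = N / nB (indicator {0})"

lemma coord_const_pos: "coord_const > 0"
  using N_pos indicator_pos by (simp add: coord_const_def)

lemma indicator_shift: "(\<lambda>n. indicator {k} (n + m)) = (indicator {k - m} :: int \<Rightarrow> real)"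
  by (auto simp: indicator_def)

lemma norm_indicator_le: "nB (indicator {n}) \<le> N * nB (indicator {0})"
  using shift[OF indicator_mem, of 0 "- n"] unfolding indicator_shift by simp

lemma abs_le_coord_const: assumes "s \<in> Bs" shows "\<bar>s j\<bar> \<le> coord_const * nB s"
proof -
  have "nB (indicator {0}) \<le> N * nB (indicator {j})"
    using shift[OF indicator_mem, of j j] unfolding indicator_shift by simp
  moreover have "\<bar>s j\<bar> * nB (indicator {j}) \<le> nB s"
    using B_dominated[OF assms, of "\<lambda>n. \<bar>s j\<bar> * indicator {j} n"]
      B.norm_scale[OF indicator_mem, of "\<bar>s j\<bar>"] by (auto simp: indicator_def)
  ultimately have "\<bar>s j\<bar> * nB (indicator {0}) \<le> N * nB s"
    by (smt (verit) N_pos abs_ge_zero mult.left_commute mult_left_mono)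
  then show ?thesis
    using indicator_pos by (simp add: coord_const_def field_simps)
qed

lemma indicator_finite_mem: "finite I \<Longrightarrow> (indicator I :: int \<Rightarrow> real) \<in> Bs"
proof (induction I rule: finite_induct)
  case (insert x F)
  then have "(indicator (insert x F) :: int \<Rightarrow> real) = (\<lambda>n. indicator F n + indicator {x} n)"
    by (auto simp: indicator_def)
  then show ?case using B.add_mem[OF insert(3) indicator_mem] by simp
qed (simp add: B.zero_mem)

lemma indicator_finite_pos:
  assumes "finite I" "I \<noteq> {}" shows "nB (indicator I :: int \<Rightarrow> real) > 0"
proof -
  have "(indicator I :: int \<Rightarrow> real) \<noteq> (\<lambda>n. 0)"
    using assms(2) by (auto simp: fun_eq_iff indicator_def)
  then show ?thesis
    using B.norm_eq_zero B.norm_nonneg indicator_finite_mem[OF assms(1)] by fastforce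
qed

end

locale weighted_seq_space = admissible_seq_space +
  fixes nr :: "int \<Rightarrow> 'a::banach \<Rightarrow> real"
  assumes nr_is_norm: "is_norm (nr m)" and nr_equiv: "equiv_to_norm (nr m)"
begin

lemma nr_triangle: "nr m (x + y) \<le> nr m x + nr m y"
  using nr_is_norm by (simp add: is_norm_def)

lemma nr_scale: "nr m (c *\<^sub>R x) = \<bar>c\<bar> * nr m x"
  using nr_is_norm by (simp add: is_norm_def)

lemma nr_eq_zero: "nr m x = 0 \<longleftrightarrow> x = 0"
  using nr_is_norm by (simp add: is_norm_def)

lemma nr_zero [simp]: "nr m 0 = 0"
  by (simp add: nr_eq_zero)

lemma nr_minus [simp]: "nr m (- x) = nr m x"
  using nr_scale[of m "-1" x] by simp

lemma nr_nonneg [simp]: "0 \<le> nr m x"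
  using nr_triangle[of m x "- x"] by simp

lemma nr_diff_commute: "nr m (x - y) = nr m (y - x)"
  using nr_minus[of m "x - y"] by simp

lemma nr_triangle_diff: "nr m (x - z) \<le> nr m (x - y) + nr m (y - z)"
  using nr_triangle[of m "x - y" "y - z"] by simp

lemma norm_le_nr: obtains c where "c > 0" "\<And>x. norm x \<le> c * nr m x"
proof -
  obtain a where a: "a > 0" "\<And>x. a * norm x \<le> nr m x"
    using nr_equiv[of m] by (auto simp: equiv_to_norm_def)
  show ?thesis
  proof (rule that[of "1 / a"])
    show "norm x \<le> 1 / a * nr m x" for x
      using a(2)[of x] a(1) by (simp add: pos_le_divide_eq mult.commute)
  qed (use a in simp)
qed

lemma nr_le_norm: obtains b where "\<And>x. nr m x \<le> b * norm x"
  using nr_equiv[of m] by (auto simp: equiv_to_norm_def)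

lemma tendsto_nr:
  assumes "(f \<longlongrightarrow> l) F" shows "((\<lambda>x. nr m (f x)) \<longlongrightarrow> nr m l) F"
proof -
  obtain b where b: "\<And>x. nr m x \<le> b * norm x"
    using nr_le_norm by blast
  have bound: "norm (nr m y - nr m l) \<le> b * norm (y - l)" for y
  proof -
    have "nr m y \<le> nr m l + nr m (y - l)" "nr m l \<le> nr m y + nr m (y - l)"
      using nr_triangle[of m l "y - l"] nr_triangle[of m y "l - y"] nr_diff_commute[of m y l]
      by simp_all
    then show ?thesis using b[of "y - l"] by simp
  qed
  have "((\<lambda>x. b * norm (f x - l)) \<longlongrightarrow> 0) F"
    by (rule tendsto_mult_right_zero[OF tendsto_norm_zero[OF LIM_zero[OF assms]]])
  then have "((\<lambda>x. nr m (f x) - nr m l) \<longlongrightarrow> 0) F"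
    by (rule Lim_null_comparison[OF always_eventually[OF allI[OF bound]]])
  then show ?thesis by (rule LIM_zero_cancel)
qed

abbreviation Y :: "(int \<Rightarrow> 'a) set" where "Y \<equiv> Y_B Bs nr"
abbreviation ny :: "(int \<Rightarrow> 'a) \<Rightarrow> real" where "ny \<equiv> Y_B_norm nB nr"

lemma Y_iff: "x \<in> Y \<longleftrightarrow> (\<lambda>n. nr n (x n)) \<in> Bs"
  by (simp add: Y_B_def)

lemma Y_dominated:
  assumes "y \<in> Y" "0 \<le> c" "\<And>n. nr n (x n) \<le> c * nr n (y n)"
  shows "x \<in> Y \<and> ny x \<le> c * ny y"
proof -
  have "(\<lambda>n. c * nr n (y n)) \<in> Bs"
    using B.scale_mem[of _ c] assms(1) by (simp add: Y_iff)
  then have "(\<lambda>n. nr n (x n)) \<in> Bs \<and> nB (\<lambda>n. nr n (x n)) \<le> nB (\<lambda>n. c * nr n (y n))"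
    using assms(2,3) by (intro B_dominated) auto
  then show ?thesis
    using B.norm_scale[of _ c] assms(1,2) by (simp add: Y_iff Y_B_norm_def)
qed

sublocale Y: function_normed_space Y ny
proof
  show "(\<lambda>n. 0) \<in> Y" using B.zero_mem by (simp add: Y_iff)
  show "(\<lambda>n. c *\<^sub>R x n) \<in> Y" if "x \<in> Y" for x c
    using Y_dominated[OF that, of "\<bar>c\<bar>"] by (simp add: nr_scale)
  show "ny (\<lambda>n. c *\<^sub>R x n) = \<bar>c\<bar> * ny x" if "x \<in> Y" for x c
    using B.norm_scale[of _ "\<bar>c\<bar>"] that by (simp add: Y_iff Y_B_norm_def nr_scale)
  show "ny x = 0 \<longleftrightarrow> x = (\<lambda>n. 0)" if "x \<in> Y" for x
    using B.norm_eq_zero that by (simp add: Y_iff Y_B_norm_def fun_eq_iff nr_eq_zero)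
  fix x y assume xy: "x \<in> Y" "y \<in> Y"
  then have "(\<lambda>n. nr n (x n) + nr n (y n)) \<in> Bs"
    by (simp add: Y_iff B.add_mem)
  then have "(\<lambda>n. nr n (x n + y n)) \<in> Bs \<and>
      nB (\<lambda>n. nr n (x n + y n)) \<le> nB (\<lambda>n. nr n (x n) + nr n (y n))"
    by (intro B_dominated) (auto simp: nr_triangle)
  then show "(\<lambda>n. x n + y n) \<in> Y" "ny (\<lambda>n. x n + y n) \<le> ny x + ny y"
    using B.norm_triangle xy by (force simp: Y_iff Y_B_norm_def)+
qed

lemma nr_le_coord_const: "x \<in> Y \<Longrightarrow> nr j (x j) \<le> coord_const * ny x"
  using abs_le_coord_const[of "\<lambda>n. nr n (x n)" j] by (simp add: Y_iff Y_B_norm_def)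

lemma norm_coordinate_le_ny: obtains c where "c > 0" "\<And>x. x \<in> Y \<Longrightarrow> norm (x j) \<le> c * ny x"
proof -
  obtain a where a: "a > 0" "\<And>x. norm x \<le> a * nr j x"
    using norm_le_nr by blast
  show ?thesis
  proof (rule that[of "a * coord_const"])
    show "norm (x j) \<le> a * coord_const * ny x" if "x \<in> Y" for x
    proof -
      have "a * nr j (x j) \<le> a * (coord_const * ny x)"
        using nr_le_coord_const[OF that] a(1) by (intro mult_left_mono) auto
      then show ?thesis using a(2)[of "x j"] by (simp add: mult.assoc)
    qed
  qed (use a coord_const_pos in simp)
qed

lemma Y_MCauchy_coordinate: "Y.MCauchy f \<Longrightarrow> Cauchy (\<lambda>k. f k j)"
  using norm_coordinate_le_ny[of j] Y.MCauchy_coordinate by metis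

lemma Y_limitin_coordinate: "limitin Y.mtopology f x sequentially \<Longrightarrow> (\<lambda>k. f k j) \<longlonglongrightarrow> x j"
  using norm_coordinate_le_ny[of j] Y.limitin_coordinate by metis

lemma Y_limitin_dominated:
  assumes f: "\<And>p. f p \<in> Y" and H: "\<And>p. H p \<in> Bs" and lim: "limitin B.mtopology H Hl sequentially"
    and dom: "\<And>p j. nr j (g j - f p j) \<le> Hl j - H p j"
  shows "limitin Y.mtopology f g sequentially"
proof -
  have Hl: "Hl \<in> Bs" using lim by (rule B.limitin_mspace)
  have diff: "(\<lambda>j. g j - f p j) \<in> Y \<and> ny (\<lambda>j. g j - f p j) \<le> B.vdist (H p) Hl" for p
  proof -
    have "\<bar>nr j (g j - f p j)\<bar> \<le> \<bar>Hl j - H p j\<bar>" for j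
      using dom[of j p] by (metis abs_ge_self abs_of_nonneg nr_nonneg order_trans)
    then have "(\<lambda>j. nr j (g j - f p j)) \<in> Bs \<and> nB (\<lambda>j. nr j (g j - f p j)) \<le> nB (\<lambda>j. Hl j - H p j)"
      by (rule B_dominated[OF B.diff_mem[OF Hl H]])
    moreover have "B.vdist (H p) Hl = nB (\<lambda>j. Hl j - H p j)"
      using B.norm_diff_commute[OF H Hl] by (simp add: B.vdist_def H Hl)
    ultimately show ?thesis by (simp add: Y_iff Y_B_norm_def)
  qed
  have g: "g \<in> Y"
    using Y.add_mem[OF diff[THEN conjunct1] f, of 0 0] by simp
  have "Y.vdist (f p) g \<le> B.vdist (H p) Hl" for p
    using diff[of p] Y.norm_diff_commute[OF f g, of p] by (simp add: Y.vdist_def f g)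
  then have "\<forall>p. norm (Y.vdist (f p) g) \<le> B.vdist (H p) Hl"
    by simp
  moreover have "(\<lambda>p. B.vdist (H p) Hl) \<longlonglongrightarrow> 0"
    using lim by (simp add: B.limitin_metric_dist_null)
  ultimately have "(\<lambda>p. Y.vdist (f p) g) \<longlonglongrightarrow> 0"
    by (rule Lim_null_comparison[OF always_eventually])
  then show ?thesis
    using f g by (simp add: Y.limitin_metric_dist_null)
qed

lemma B_nonneg_geometric_series:
  assumes h: "\<And>i. h i \<in> Bs" "\<And>i j. 0 \<le> h i j" and small: "\<And>i. nB (h i) \<le> (1/2) ^ i"
  obtains Hl where "limitin B.mtopology (\<lambda>n j. \<Sum>i<n. h i j) Hl sequentially"
    "\<And>n j. (\<Sum>i<n. h i j) \<le> Hl j"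
proof -
  define H where "H n = (\<lambda>j. \<Sum>i<n. h i j)" for n
  have H: "H n \<in> Bs" for n
    unfolding H_def by (rule B.sum_mem) (simp_all add: h)
  have "B.vdist (H (Suc i)) (H i) = nB (h i)" for i
  proof -
    have "(\<lambda>j. H (Suc i) j - H i j) = h i" by (simp add: H_def)
    then show ?thesis by (simp add: B.vdist_def H)
  qed
  then have "B.MCauchy H"
    using H small by (intro B.MCauchy_geometric[where c = 1]) simp_all
  then obtain Hl where Hl: "limitin B.mtopology H Hl sequentially"
    using B_mcomplete unfolding B.mcomplete_def by blast
  moreover have "H n j \<le> Hl j" for n j
  proof -
    have "incseq (\<lambda>n. H n j)"
      by (rule incseq_SucI) (simp add: H_def h)
    then show ?thesis
      using incseq_le B.limitin_coordinate[OF abs_le_coord_const[unfolded real_norm_def[symmetric]] Hl]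
      by blast
  qed
  ultimately show ?thesis using that unfolding H_def by blast
qed

text \<open>Riesz--Fischer argument: the partial sums of the weighted norms of the increments converge
  in \<open>B\<close> and dominate the tails of \<open>f\<close>, and the lattice property of \<open>B\<close> turns this into
  convergence in \<open>Y_B\<close>.\<close>

lemma Y_limitin_of_fast_increments:
  assumes f: "\<And>p. f p \<in> Y" and fast: "\<And>i. Y.vdist (f (Suc i)) (f i) \<le> (1/2) ^ i"
  obtains g where "limitin Y.mtopology f g sequentially"
proof -
  define h where "h i = (\<lambda>j. nr j (f (Suc i) j - f i j))" for i
  have h: "h i \<in> Bs" "nB (h i) \<le> (1/2) ^ i" for i
    using Y.diff_mem[OF f f] fast[of i] f by (simp_all add: h_def Y_iff Y.vdist_def Y_B_norm_def)
  then obtain Hl where Hl: "limitin B.mtopology (\<lambda>n j. \<Sum>i<n. h i j) Hl sequentially"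
    and le_Hl: "\<And>n j. (\<Sum>i<n. h i j) \<le> Hl j"
    using B_nonneg_geometric_series[of h] by (auto simp: h_def)
  have telescope: "nr j (f n j - f p j) \<le> (\<Sum>i<n. h i j) - (\<Sum>i<p. h i j)" if "p \<le> n" for p n j
    using that
  proof (induction n rule: dec_induct)
    case (step n)
    then show ?case
      using nr_triangle_diff[of j "f (Suc n) j" "f p j" "f n j"] by (simp add: h_def)
  qed simp
  have "Y.MCauchy f"
    using f fast by (intro Y.MCauchy_geometric[where c = 1]) simp_all
  then have "Cauchy (\<lambda>p. f p j)" for j
    by (rule Y_MCauchy_coordinate)
  then obtain g where g: "\<And>j. (\<lambda>p. f p j) \<longlonglongrightarrow> g j"
    unfolding Cauchy_convergent_iff convergent_def by metis
  have "nr j (g j - f p j) \<le> Hl j - (\<Sum>i<p. h i j)" for p j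
  proof (rule LIMSEQ_le_const2)
    show "(\<lambda>n. nr j (f n j - f p j)) \<longlonglongrightarrow> nr j (g j - f p j)"
      by (intro tendsto_nr tendsto_diff g tendsto_const)
    show "\<exists>N. \<forall>n\<ge>N. nr j (f n j - f p j) \<le> Hl j - (\<Sum>i<p. h i j)"
      using telescope le_Hl by (meson diff_right_mono order_trans)
  qed
  moreover have "(\<lambda>j. \<Sum>i<p. h i j) \<in> Bs" for p
    by (rule B.sum_mem) (simp_all add: h)
  ultimately show ?thesis
    by (intro that Y_limitin_dominated[where f = f and H = "\<lambda>n j. \<Sum>i<n. h i j", OF f _ Hl])
qed

lemma Y_mcomplete: "Y.mcomplete"
  unfolding Y.mcomplete_def
proof (intro allI impI)
  fix \<sigma> assume \<sigma>: "Y.MCauchy \<sigma>"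
  obtain r where r: "strict_mono r" "\<And>i. Y.vdist (\<sigma> (r (Suc i))) (\<sigma> (r i)) < (1/2) ^ i"
    using Y.MCauchy_fast_subsequence[OF \<sigma>] by blast
  moreover have "(\<sigma> \<circ> r) p \<in> Y" "Y.vdist ((\<sigma> \<circ> r) (Suc i)) ((\<sigma> \<circ> r) i) \<le> (1/2) ^ i" for p i
    using \<sigma> r(2)[of i] by (auto simp: Y.MCauchy_def less_imp_le)
  then obtain g where "limitin Y.mtopology (\<sigma> \<circ> r) g sequentially"
    by (rule Y_limitin_of_fast_increments)
  ultimately show "\<exists>g. limitin Y.mtopology \<sigma> g sequentially"
    using Y.MCauchy_convergent_subsequence[OF \<sigma>] by blast
qed

definition impulse :: "int \<Rightarrow> 'a \<Rightarrow> int \<Rightarrow> 'a" where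
  "impulse m v = (\<lambda>j. if j = m then v else 0)"

lemma impulse_mem: "impulse m v \<in> Y"
  and norm_impulse_le: "ny (impulse m v) \<le> N * nB (indicator {0}) * nr m v"
proof -
  have eq: "(\<lambda>n. nr n (impulse m v n)) = (\<lambda>n. nr m v * indicator {m} n)"
    by (auto simp: impulse_def fun_eq_iff)
  show "impulse m v \<in> Y"
    using B.scale_mem[OF indicator_mem, of "nr m v" m] by (simp add: Y_iff eq)
  have "nr m v * nB (indicator {m}) \<le> nr m v * (N * nB (indicator {0}))"
    by (intro mult_left_mono norm_indicator_le) simp
  then show "ny (impulse m v) \<le> N * nB (indicator {0}) * nr m v"
    using B.norm_scale[OF indicator_mem, of "nr m v" m] by (simp add: Y_B_norm_def eq mult_ac)
qed

end

section \<open>Boundedness of the inverse of \<open>T_B\<close>\<close>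

locale bijective_difference_operator = weighted_seq_space +
  fixes A :: "int \<Rightarrow> 'a \<Rightarrow> 'a"
  assumes A_bounded_linear: "bounded_linear (A m)"
    and T_bij: "bij_betw (T_B A) (dom_T_B Bs nr A) Y"
begin

abbreviation T :: "(int \<Rightarrow> 'a) \<Rightarrow> int \<Rightarrow> 'a" where "T \<equiv> T_B A"

lemma A_linear: "linear (A m)"
  using A_bounded_linear by (rule bounded_linear.linear)

lemma A_zero [simp]: "A m 0 = 0"
  using A_linear by (rule linear_0)

lemma T_apply: "T x n = x n - A (n - 1) (x (n - 1))"
  by (simp add: T_B_def)

lemma T_add: "T (\<lambda>j. x j + y j) = (\<lambda>j. T x j + T y j)"
  by (simp add: T_B_def fun_eq_iff linear_add[OF A_linear])

lemma T_diff: "T (\<lambda>j. x j - y j) = (\<lambda>j. T x j - T y j)"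
  by (simp add: T_B_def fun_eq_iff linear_diff[OF A_linear])

lemma T_scale: "T (\<lambda>j. c *\<^sub>R x j) = (\<lambda>j. c *\<^sub>R T x j)"
  by (simp add: T_B_def fun_eq_iff linear_scale[OF A_linear] scaleR_diff_right)

lemma T_zero: "T (\<lambda>j. 0) = (\<lambda>j. 0)"
  by (simp add: T_B_def)

lemma T_impulse: "T (impulse m v) = (\<lambda>j. impulse m v j - impulse (m + 1) (A m v) j)"
  by (auto simp: T_B_def impulse_def fun_eq_iff)

lemma T_inj: "x \<in> Y \<Longrightarrow> T x \<in> Y \<Longrightarrow> x' \<in> Y \<Longrightarrow> T x' \<in> Y \<Longrightarrow> T x = T x' \<Longrightarrow> x = x'"
  using T_bij unfolding bij_betw_def inj_on_def by (simp add: dom_T_B_def)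

definition Tinv :: "(int \<Rightarrow> 'a) \<Rightarrow> int \<Rightarrow> 'a" where
  "Tinv = the_inv_into (dom_T_B Bs nr A) T"

lemma Tinv_mem: "y \<in> Y \<Longrightarrow> Tinv y \<in> Y" and T_Tinv: "y \<in> Y \<Longrightarrow> T (Tinv y) = y"
  using the_inv_into_into[OF bij_betw_imp_inj_on[OF T_bij], of y]
    f_the_inv_into_f_bij_betw[OF T_bij, of y] T_bij
  by (auto simp: Tinv_def dom_T_B_def bij_betw_def)

lemma Tinv_eq: "x \<in> Y \<Longrightarrow> y \<in> Y \<Longrightarrow> T x = y \<Longrightarrow> Tinv y = x"
  using T_inj Tinv_mem T_Tinv by metis

lemma Tinv_diff: "y \<in> Y \<Longrightarrow> z \<in> Y \<Longrightarrow> Tinv (\<lambda>j. y j - z j) = (\<lambda>j. Tinv y j - Tinv z j)"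
  by (intro Tinv_eq Y.diff_mem Tinv_mem) (simp_all add: T_diff T_Tinv)

lemma Tinv_scale: "y \<in> Y \<Longrightarrow> Tinv (\<lambda>j. c *\<^sub>R y j) = (\<lambda>j. c *\<^sub>R Tinv y j)"
  by (intro Tinv_eq Y.scale_mem Tinv_mem) (simp_all add: T_scale T_Tinv)

lemma Tinv_zero: "Tinv (\<lambda>j. 0) = (\<lambda>j. 0)"
  by (intro Tinv_eq Y.zero_mem) (simp add: T_zero)

lemma T_closed:
  assumes "limitin Y.mtopology S x sequentially" "limitin Y.mtopology (\<lambda>k. T (S k)) y sequentially"
  shows "T x = y"
proof
  fix j
  have "(\<lambda>k. S k j - A (j - 1) (S k (j - 1))) \<longlonglongrightarrow> x j - A (j - 1) (x (j - 1))"
    using Y_limitin_coordinate[OF assms(1)] A_bounded_linear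
    by (intro tendsto_diff bounded_linear.tendsto[of "A (j - 1)"]) auto
  moreover have "(\<lambda>k. T (S k) j) \<longlonglongrightarrow> y j"
    by (rule Y_limitin_coordinate[OF assms(2)])
  ultimately show "T x j = y j"
    by (simp add: T_apply LIMSEQ_unique)
qed

lemma Tinv_sublevel_dense_in_ball:
  obtains k :: real and y0 r where "0 \<le> k" "y0 \<in> Y" "r > 0"
    "\<And>z e. z \<in> Y \<Longrightarrow> Y.vdist y0 z < r \<Longrightarrow> e > 0 \<Longrightarrow> \<exists>z'\<in>Y. ny (Tinv z') \<le> k \<and> Y.vdist z z' < e"
proof -
  define F where "F k = {y \<in> Y. ny (Tinv y) \<le> real k}" for k :: nat
  have "Y \<subseteq> (\<Union>k. F k)"
  proof
    fix y assume "y \<in> Y"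
    obtain k :: nat where "ny (Tinv y) \<le> real k" using real_arch_simple by blast
    with \<open>y \<in> Y\<close> show "y \<in> (\<Union>k. F k)" by (auto simp: F_def)
  qed
  moreover have "Y \<noteq> {}" using Y.zero_mem by blast
  ultimately obtain k y0 r where y0: "y0 \<in> Y" and r: "r > 0"
    and ball: "Y.mball y0 r \<subseteq> Y.mtopology closure_of F k"
    using Y.mcomplete_Baire_cover[OF Y_mcomplete] by metis
  have "\<exists>z'\<in>Y. ny (Tinv z') \<le> real k \<and> Y.vdist z z' < e"
    if "z \<in> Y" "Y.vdist y0 z < r" "e > 0" for z e
  proof -
    have "z \<in> Y.mtopology closure_of F k" using that(1,2) ball y0 by auto
    then show ?thesis unfolding Y.metric_closure_of F_def using \<open>e > 0\<close> by auto
  qed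
  with y0 r show ?thesis using that[of "real k"] by simp
qed

text \<open>A small \<open>z\<close> is approximated by the difference of approximants of \<open>y0 + z\<close> and of \<open>y0\<close>.\<close>

lemma Tinv_approximation_near_zero:
  obtains k r where "0 \<le> k" "r > 0"
    "\<And>z e. z \<in> Y \<Longrightarrow> ny z < r \<Longrightarrow> e > 0 \<Longrightarrow> \<exists>w\<in>Y. ny (Tinv w) \<le> k \<and> ny (\<lambda>j. z j - w j) < e"
proof -
  obtain k y0 r where k: "0 \<le> k" and y0: "y0 \<in> Y" and r: "r > 0" and near:
    "\<And>z e. z \<in> Y \<Longrightarrow> Y.vdist y0 z < r \<Longrightarrow> e > 0 \<Longrightarrow> \<exists>z'\<in>Y. ny (Tinv z') \<le> k \<and> Y.vdist z z' < e"
    using Tinv_sublevel_dense_in_ball by blast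
  have "\<exists>w\<in>Y. ny (Tinv w) \<le> 2 * k \<and> ny (\<lambda>j. z j - w j) < e"
    if z: "z \<in> Y" "ny z < r" and e: "e > 0" for z e
  proof -
    have y0z: "(\<lambda>j. y0 j + z j) \<in> Y" using Y.add_mem[OF y0 z(1)] .
    have "Y.vdist y0 (\<lambda>j. y0 j + z j) < r"
      using z Y.norm_minus[OF z(1)] by (simp add: Y.vdist_def y0 y0z)
    then obtain z1 where z1: "z1 \<in> Y" "ny (Tinv z1) \<le> k" "Y.vdist (\<lambda>j. y0 j + z j) z1 < e / 2"
      using near[OF y0z _, of "e / 2"] e by auto
    obtain z2 where z2: "z2 \<in> Y" "ny (Tinv z2) \<le> k" "Y.vdist y0 z2 < e / 2"
      using near[OF y0 _, of "e / 2"] e r y0 by auto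
    define w where "w = (\<lambda>j. z1 j - z2 j)"
    have "ny (Tinv w) \<le> ny (Tinv z1) + ny (Tinv z2)"
      unfolding w_def Tinv_diff[OF z1(1) z2(1)] by (intro Y.norm_triangle_diff Tinv_mem z1 z2)
    also have "\<dots> \<le> 2 * k" using z1 z2 by simp
    finally have "ny (Tinv w) \<le> 2 * k" .
    moreover have "ny (\<lambda>j. z j - w j) < e"
    proof -
      have "(\<lambda>j. z j - w j) = (\<lambda>j. (y0 j + z j - z1 j) - (y0 j - z2 j))"
        by (simp add: w_def fun_eq_iff algebra_simps)
      then have "ny (\<lambda>j. z j - w j) \<le> Y.vdist (\<lambda>j. y0 j + z j) z1 + Y.vdist y0 z2"
        using Y.norm_triangle_diff[OF Y.diff_mem Y.diff_mem, OF y0z z1(1) y0 z2(1)]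
        by (simp add: Y.vdist_def y0 y0z z1 z2)
      then show ?thesis using z1(3) z2(3) by simp
    qed
    ultimately show ?thesis using Y.diff_mem[OF z1(1) z2(1)] by (auto simp: w_def)
  qed
  then show ?thesis using that[of "2 * k"] k r by simp
qed

lemma Tinv_halving_approximation:
  obtains C where "0 \<le> C"
    "\<And>z. z \<in> Y \<Longrightarrow> \<exists>w\<in>Y. ny (Tinv w) \<le> C * ny z \<and> ny (\<lambda>j. z j - w j) \<le> ny z / 2"
proof -
  obtain k r where k: "0 \<le> k" and r: "r > 0"
    and approx: "\<And>z e. z \<in> Y \<Longrightarrow> ny z < r \<Longrightarrow> e > 0 \<Longrightarrow>
      \<exists>w\<in>Y. ny (Tinv w) \<le> k \<and> ny (\<lambda>j. z j - w j) < e"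
    using Tinv_approximation_near_zero by blast
  define C where "C = 2 * k / r"
  have "\<exists>w\<in>Y. ny (Tinv w) \<le> C * ny z \<and> ny (\<lambda>j. z j - w j) \<le> ny z / 2" if z: "z \<in> Y" for z
  proof (cases "ny z = 0")
    case True
    then have "z = (\<lambda>n. 0)" using Y.norm_eq_zero[OF z] by simp
    then show ?thesis using Y.zero_mem by (intro bexI[of _ "\<lambda>n. 0"]) (simp_all add: Tinv_zero)
  next
    case False
    then have nz: "ny z > 0" using Y.norm_nonneg[OF z] by simp
    define t where "t = r / (2 * ny z)"
    have t: "t > 0" using r nz by (simp add: t_def)
    have tz: "(\<lambda>j. t *\<^sub>R z j) \<in> Y" "ny (\<lambda>j. t *\<^sub>R z j) = r / 2"
      using Y.scale_mem[OF z] Y.norm_scale[OF z, of t] t nz r by (simp_all add: t_def)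
    then obtain w' where w': "w' \<in> Y" "ny (Tinv w') \<le> k" "ny (\<lambda>j. t *\<^sub>R z j - w' j) < r / 4"
      using approx[OF tz(1), of "r / 4"] r by auto
    define w where "w = (\<lambda>j. (1 / t) *\<^sub>R w' j)"
    have "ny (Tinv w) = ny (Tinv w') / t"
      using Y.norm_scale[OF Tinv_mem[OF w'(1)], of "1 / t"] t by (simp add: w_def Tinv_scale[OF w'(1)])
    also have "\<dots> \<le> k / t" using w'(2) t by (simp add: divide_right_mono)
    also have "\<dots> = C * ny z" using r nz by (simp add: C_def t_def)
    finally have "ny (Tinv w) \<le> C * ny z" .
    moreover have "ny (\<lambda>j. z j - w j) \<le> ny z / 2"
    proof -
      have "(\<lambda>j. z j - w j) = (\<lambda>j. (1 / t) *\<^sub>R (t *\<^sub>R z j - w' j))"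
        using t by (simp add: w_def fun_eq_iff scaleR_diff_right)
      then have "ny (\<lambda>j. z j - w j) = ny (\<lambda>j. t *\<^sub>R z j - w' j) / t"
        using Y.norm_scale[OF Y.diff_mem[OF tz(1) w'(1)], of "1 / t"] t by simp
      also have "\<dots> \<le> (r / 4) / t" using w'(3) t by (intro divide_right_mono) auto
      also have "\<dots> = ny z / 2" using r nz by (simp add: t_def)
      finally show ?thesis .
    qed
    ultimately show ?thesis using Y.scale_mem[OF w'(1)] by (auto simp: w_def)
  qed
  moreover have "0 \<le> C" using k r by (simp add: C_def)
  ultimately show ?thesis using that by blast
qed

lemma Tinv_geometric_series:
  assumes z: "\<And>i. z i \<in> Y" and small: "\<And>i. ny (Tinv (z i)) \<le> c * (1/2) ^ i"
    and sums: "limitin Y.mtopology (\<lambda>n j. \<Sum>i<n. z i j) y sequentially"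
  shows "ny (Tinv y) \<le> 2 * c"
proof -
  define S where "S n = (\<lambda>j. \<Sum>i<n. Tinv (z i) j)" for n
  have S: "S n \<in> Y" for n
    unfolding S_def using z by (intro Y.sum_mem Tinv_mem) auto
  have S_Suc: "S (Suc n) = (\<lambda>j. S n j + Tinv (z n) j)" for n
    by (simp add: S_def)
  have step: "Y.vdist (S (Suc i)) (S i) \<le> c * (1/2) ^ i" for i
    using S[of "Suc i"] small[of i] by (simp add: Y.vdist_def S S_Suc)
  obtain x where x: "limitin Y.mtopology S x sequentially"
    using Y_mcomplete Y.MCauchy_geometric[OF S step] unfolding Y.mcomplete_def by blast
  have x_mem: "x \<in> Y" using x by (rule Y.limitin_mspace)
  have "T (S n) = (\<lambda>j. \<Sum>i<n. z i j)" for n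
  proof (induction n)
    case (Suc n)
    then show ?case by (simp add: S_Suc T_add T_Tinv z)
  qed (simp add: S_def T_zero)
  then have "Tinv y = x"
    using Tinv_eq[OF x_mem Y.limitin_mspace[OF sums]] T_closed[OF x] sums by auto
  moreover have "ny x \<le> 2 * c + Y.vdist (S n) x" for n
  proof -
    have "Y.vdist (S n) (S 0) \<le> 2 * c * (1/2) ^ 0"
      by (rule Y.mdist_geometric_tail[OF S step]) simp
    then have "ny (S n) \<le> 2 * c"
      using S[of n] by (simp add: Y.vdist_def S_def Y.zero_mem)
    moreover have "ny x \<le> ny (S n) + Y.vdist (S n) x"
      using Y.norm_triangle[OF S Y.diff_mem[OF x_mem S], of n n] S[of n] x_mem
      by (simp add: Y.vdist_def Y.norm_diff_commute)
    ultimately show ?thesis by simp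
  qed
  then have "ny x \<le> 2 * c + 0"
  proof (intro LIMSEQ_le_const[OF tendsto_add[OF tendsto_const]])
    show "(\<lambda>n. Y.vdist (S n) x) \<longlonglongrightarrow> 0"
      using x by (simp add: Y.limitin_metric_dist_null)
  qed blast
  ultimately show ?thesis by simp
qed

text \<open>The iteration of the open mapping theorem: approximate \<open>y\<close>, then the residual, and so on.\<close>

lemma Tinv_bound_of_halving_approximation:
  assumes C: "0 \<le> C"
    and approx: "\<And>z. z \<in> Y \<Longrightarrow> \<exists>w\<in>Y. ny (Tinv w) \<le> C * ny z \<and> ny (\<lambda>j. z j - w j) \<le> ny z / 2"
    and y: "y \<in> Y"
  shows "ny (Tinv y) \<le> 2 * (C * ny y)"
proof -
  obtain W where W: "\<And>z. z \<in> Y \<Longrightarrow>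
      W z \<in> Y \<and> ny (Tinv (W z)) \<le> C * ny z \<and> ny (\<lambda>j. z j - W z j) \<le> ny z / 2"
    using approx by metis
  define res where "res = rec_nat y (\<lambda>_ z j. z j - W z j)"
  have res_0: "res 0 = y" and res_Suc: "res (Suc i) = (\<lambda>j. res i j - W (res i) j)" for i
    by (simp_all add: res_def)
  have res: "res i \<in> Y" for i
    by (induction i) (simp_all add: res_0 res_Suc y Y.diff_mem W)
  have norm_res: "ny (res i) \<le> ny y * (1/2) ^ i" for i
  proof (induction i)
    case (Suc i)
    then show ?case using W[OF res[of i]] by (simp add: res_Suc)
  qed (simp add: res_0)
  show ?thesis
  proof (rule Tinv_geometric_series)
    show "W (res i) \<in> Y" for i using W[OF res] by blast
    show "ny (Tinv (W (res i))) \<le> C * ny y * (1/2) ^ i" for i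
      using order_trans[OF W[OF res[of i], THEN conjunct2, THEN conjunct1] mult_left_mono[OF norm_res C]]
      by (simp add: ac_simps)
    have partial_sums: "(\<lambda>j. \<Sum>i<n. W (res i) j) = (\<lambda>j. y j - res n j)" for n
      by (induction n) (simp_all add: res_0 res_Suc fun_eq_iff)
    have "\<forall>n. norm (Y.vdist (\<lambda>j. y j - res n j) y) \<le> ny y * (1/2) ^ n"
      using norm_res Y.norm_minus[OF res] Y.norm_nonneg[OF res]
      by (simp add: Y.vdist_def Y.diff_mem y res)
    moreover have "(\<lambda>n. ny y * (1/2::real) ^ n) \<longlonglongrightarrow> 0"
      by (intro tendsto_mult_right_zero LIMSEQ_power_zero) simp
    ultimately have "(\<lambda>n. Y.vdist (\<lambda>j. y j - res n j) y) \<longlonglongrightarrow> 0"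
      by (rule Lim_null_comparison[OF always_eventually])
    then show "limitin Y.mtopology (\<lambda>n j. \<Sum>i<n. W (res i) j) y sequentially"
      by (simp add: partial_sums Y.limitin_metric_dist_null Y.diff_mem y res)
  qed
qed

lemma T_inverse_bounded: obtains K where "1 \<le> K" "\<And>x. x \<in> Y \<Longrightarrow> T x \<in> Y \<Longrightarrow> ny x \<le> K * ny (T x)"
proof -
  obtain C where C: "0 \<le> C" and approx:
    "\<And>z. z \<in> Y \<Longrightarrow> \<exists>w\<in>Y. ny (Tinv w) \<le> C * ny z \<and> ny (\<lambda>j. z j - w j) \<le> ny z / 2"
    using Tinv_halving_approximation by blast
  have "ny x \<le> max 1 (2 * C) * ny (T x)" if "x \<in> Y" "T x \<in> Y" for x
  proof -
    have "ny x \<le> 2 * C * ny (T x)"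
      using Tinv_bound_of_halving_approximation[OF C approx that(2)] Tinv_eq[OF that refl]
      by (simp add: ac_simps)
    also have "\<dots> \<le> max 1 (2 * C) * ny (T x)"
      using Y.norm_nonneg[OF that(2)] by (intro mult_right_mono) auto
    finally show ?thesis .
  qed
  then show ?thesis using that[of "max 1 (2 * C)"] by simp
qed

end

section \<open>The projections \<open>P_m\<close>\<close>

locale bounded_inverse_difference_operator = bijective_difference_operator +
  fixes K :: real
  assumes K_ge_1: "1 \<le> K"
    and T_inverse_bound: "x \<in> Y \<Longrightarrow> T x \<in> Y \<Longrightarrow> ny x \<le> K * ny (T x)"
begin

definition M :: real where
  "M = 1 + K * N * N"

lemma M_ge_1: "1 \<le> M"
  using K_ge_1 N_pos by (simp add: M_def)

definition green :: "int \<Rightarrow> 'a \<Rightarrow> int \<Rightarrow> 'a" where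
  "green m v = Tinv (impulse m v)"

lemma green_mem: "green m v \<in> Y" and T_green: "T (green m v) = impulse m v"
  using Tinv_mem T_Tinv impulse_mem by (simp_all add: green_def)

lemma green_eq: "x \<in> Y \<Longrightarrow> T x = impulse m v \<Longrightarrow> green m v = x"
  using Tinv_eq impulse_mem by (simp add: green_def)

lemma green_step: "j \<noteq> m \<Longrightarrow> green m v j = A (j - 1) (green m v (j - 1))"
  using fun_cong[OF T_green, of m v j] by (simp add: T_apply impulse_def)

lemma green_bound: "nr j (green m v j) \<le> K * N * N * nr m v"
proof -
  have "nr j (green m v j) \<le> coord_const * ny (green m v)"
    by (rule nr_le_coord_const[OF green_mem])
  also have "\<dots> \<le> coord_const * (K * (N * nB (indicator {0}) * nr m v))"
  proof -
    have "ny (green m v) \<le> K * ny (impulse m v)"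
      using T_inverse_bound[OF green_mem] by (simp add: T_green impulse_mem)
    also have "\<dots> \<le> K * (N * nB (indicator {0}) * nr m v)"
      using norm_impulse_le K_ge_1 by (simp add: mult_left_mono)
    finally show ?thesis using coord_const_pos by simp
  qed
  also have "\<dots> = K * N * N * nr m v"
    using indicator_pos[of 0] by (simp add: coord_const_def)
  finally show ?thesis .
qed

lemma green_truncate:
  assumes "m \<le> k" shows "green k (green m v k) = (\<lambda>j. if k \<le> j then green m v j else 0)"
proof (rule green_eq)
  show "(\<lambda>j. if k \<le> j then green m v j else 0) \<in> Y"
    by (rule Y_dominated[OF green_mem, of 1, THEN conjunct1]) auto
  have "T (\<lambda>j. if k \<le> j then green m v j else 0) j = impulse k (green m v k) j" for j
  proof (cases "k < j")
    case True
    then show ?thesis using green_step[of j m v] assms by (simp add: T_apply impulse_def)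
  qed (auto simp: T_apply impulse_def)
  then show "T (\<lambda>j. if k \<le> j then green m v j else 0) = impulse k (green m v k)" ..
qed

lemma green_mono:
  assumes "m \<le> k" "k \<le> j" shows "nr j (green m v j) \<le> M * nr k (green m v k)"
proof -
  have "nr j (green m v j) \<le> K * N * N * nr k (green m v k)"
    using green_bound[of j k "green m v k"] green_truncate[of m k v] assms by simp
  also have "\<dots> \<le> M * nr k (green m v k)"
    by (intro mult_right_mono) (simp_all add: M_def)
  finally show ?thesis .
qed

lemma green_add: "green m (v + v') = (\<lambda>j. green m v j + green m v' j)"
  by (intro green_eq Y.add_mem green_mem) (auto simp: T_add T_green impulse_def)

lemma green_scale: "green m (c *\<^sub>R v) = (\<lambda>j. c *\<^sub>R green m v j)"
  by (intro green_eq Y.scale_mem green_mem) (auto simp: T_scale T_green impulse_def)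

definition P :: "int \<Rightarrow> 'a \<Rightarrow> 'a" where
  "P m v = green m v m"

lemma P_idem: "P m (P m v) = P m v"
  using green_truncate[of m m v] by (simp add: P_def)

lemma nr_P_le: "nr m (P m x) \<le> K * N * N * nr m x"
  using green_bound[of m m x] by (simp add: P_def)

lemma P_bounded_linear: "bounded_linear (P m)"
proof -
  obtain a where a: "a > 0" "\<And>x. norm x \<le> a * nr m x"
    using norm_le_nr by blast
  obtain b where b: "\<And>x. nr m x \<le> b * norm x"
    using nr_le_norm by blast
  show ?thesis
  proof (rule bounded_linear_intro[of _ "a * (K * N * N) * b"])
    show "P m (x + y) = P m x + P m y" for x y by (simp add: P_def green_add)
    show "P m (c *\<^sub>R x) = c *\<^sub>R P m x" for c x by (simp add: P_def green_scale)
    show "norm (P m x) \<le> norm x * (a * (K * N * N) * b)" for x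
    proof -
      have "norm (P m x) \<le> a * (K * N * N * nr m x)"
        using order_trans[OF a(2) mult_left_mono[OF nr_P_le]] a(1) by simp
      also have "\<dots> \<le> a * (K * N * N * (b * norm x))"
        using a(1) K_ge_1 N_pos b[of x] by (simp add: mult_left_mono)
      finally show ?thesis by (simp add: mult_ac)
    qed
  qed
qed

lemma A_P: "A m (P m v) = P (m + 1) (A m v)"
proof -
  have "green (m + 1) (A m v) = (\<lambda>j. green m v j - impulse m v j)"
    by (intro green_eq Y.diff_mem green_mem impulse_mem) (simp add: T_diff T_green T_impulse)
  then show ?thesis
    using green_step[of "m + 1" m v] by (simp add: P_def impulse_def)
qed

definition backward :: "int \<Rightarrow> 'a \<Rightarrow> int \<Rightarrow> 'a" where
  "backward m w = (\<lambda>j. impulse m w j - green m w j)"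

lemma backward_mem: "backward m w \<in> Y"
  unfolding backward_def by (intro Y.diff_mem impulse_mem green_mem)

lemma T_backward: "T (backward m w) = (\<lambda>j. - impulse (m + 1) (A m w) j)"
  by (simp add: backward_def T_diff T_green T_impulse)

lemma backward_step: "j \<le> m \<Longrightarrow> backward m w j = A (j - 1) (backward m w (j - 1))"
  using fun_cong[OF T_backward, of m w j] by (simp add: T_apply impulse_def)

lemma backward_at: "backward m w m = w - P m w"
  by (simp add: backward_def impulse_def P_def)

lemma green_backward:
  assumes "k \<le> m"
  shows "green k (backward m w k) = (\<lambda>j. impulse k (backward m w k) j - (if j \<le> k then backward m w j else 0))"
proof (rule green_eq)
  have "(\<lambda>j. if j \<le> k then backward m w j else 0) \<in> Y"
    by (rule Y_dominated[OF backward_mem, of 1, THEN conjunct1]) auto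
  then show "(\<lambda>j. impulse k (backward m w k) j - (if j \<le> k then backward m w j else 0)) \<in> Y"
    by (intro Y.diff_mem impulse_mem)
  have "T (\<lambda>j. if j \<le> k then backward m w j else 0) j = - impulse (k + 1) (A k (backward m w k)) j"
    for j
  proof (cases "j \<le> k")
    case True
    then show ?thesis using backward_step[of j m w] assms by (simp add: T_apply impulse_def)
  qed (auto simp: T_apply impulse_def)
  then show "T (\<lambda>j. impulse k (backward m w k) j - (if j \<le> k then backward m w j else 0))
      = impulse k (backward m w k)"
    by (simp add: T_diff T_impulse fun_eq_iff)
qed

lemma backward_truncate:
  "k \<le> m \<Longrightarrow> backward k (backward m w k) = (\<lambda>j. if j \<le> k then backward m w j else 0)"
  using green_backward[of k m w] by (simp add: backward_def fun_eq_iff)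

lemma P_backward: "k \<le> m \<Longrightarrow> P k (backward m w k) = 0"
  using green_backward[of k m w] by (simp add: P_def impulse_def)

lemma P_complement: "P m (v - P m v) = 0"
  using P_backward[of m m v] by (simp add: backward_at)

lemma backward_bound: "nr j (backward m w j) \<le> M * nr m w"
proof -
  have "nr j (backward m w j) \<le> nr j (impulse m w j) + nr j (green m w j)"
    using nr_triangle[of j "impulse m w j" "- green m w j"] by (simp add: backward_def)
  also have "\<dots> \<le> nr m w + K * N * N * nr m w"
    using green_bound[of j m w] by (cases "j = m") (simp_all add: impulse_def add_increasing)
  finally show ?thesis by (simp add: M_def algebra_simps)
qed

lemma backward_mono: "j \<le> k \<Longrightarrow> k \<le> m \<Longrightarrow> nr j (backward m w j) \<le> M * nr k (backward m w k)"
  using backward_bound[of j k "backward m w k"] backward_truncate[of k m w] by simp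

lemma A_kernel_bij: "bij_betw (A m) {x. P m x = 0} {x. P (m + 1) x = 0}"
proof (rule bij_betw_imageI)
  show "inj_on (A m) {x. P m x = 0}"
  proof (rule inj_onI)
    fix x y assume "x \<in> {x. P m x = 0}" "y \<in> {x. P m x = 0}" and eq: "A m x = A m y"
    then have P: "P m (x - y) = 0"
      using linear_diff[OF bounded_linear.linear[OF P_bounded_linear]] by simp
    have "T (backward m (x - y)) = (\<lambda>j. 0)"
      using eq by (simp add: T_backward impulse_def linear_diff[OF A_linear] fun_eq_iff)
    then have "backward m (x - y) = (\<lambda>j. 0)"
      using Tinv_eq[OF backward_mem Y.zero_mem] Tinv_zero by metis
    then show "x = y"
      using fun_cong[of _ _ m] backward_at[of m "x - y"] P by force
  qed
  show "A m ` {x. P m x = 0} = {x. P (m + 1) x = 0}"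
  proof
    show "A m ` {x. P m x = 0} \<subseteq> {x. P (m + 1) x = 0}"
      using A_P[symmetric] by auto
    show "{x. P (m + 1) x = 0} \<subseteq> A m ` {x. P m x = 0}"
    proof
      fix w assume "w \<in> {x. P (m + 1) x = 0}"
      then have "A m (backward (m + 1) w m) = w"
        using backward_step[of "m + 1" "m + 1" w] backward_at[of "m + 1" w] by simp
      moreover have "P m (backward (m + 1) w m) = 0"
        using P_backward[of m "m + 1" w] by simp
      ultimately show "w \<in> A m ` {x. P m x = 0}" by force
    qed
  qed
qed

lemma cocycle_trajectory:
  assumes "\<And>j. m < j \<Longrightarrow> j \<le> m + int k \<Longrightarrow> u j = A (j - 1) (u (j - 1))"
  shows "cocycle A m k (u m) = u (m + int k)"
  using assms
proof (induction k)
  case (Suc k)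
  then have "cocycle A m (Suc k) (u m) = A (m + int k) (u (m + int k))" by simp
  also have "\<dots> = u (m + int (Suc k))"
    using Suc.prems[of "m + int (Suc k)"] by simp
  finally show ?case .
qed simp

lemma evol_trajectory:
  assumes "m \<le> n" "\<And>j. m < j \<Longrightarrow> j \<le> n \<Longrightarrow> u j = A (j - 1) (u (j - 1))"
  shows "evol A n m (u m) = u n"
  using cocycle_trajectory[of m "nat (n - m)" u] assms by (simp add: evol_def)

lemma cocycle_kernel: "P m x = 0 \<Longrightarrow> P (m + int k) (cocycle A m k x) = 0"
proof (induction k)
  case (Suc k)
  have "P (m + int k + 1) (A (m + int k) (cocycle A m k x)) = 0"
    using A_P[symmetric] Suc by simp
  then show ?case by (simp add: ac_simps)
qed simp

lemma cocycle_inj_on_kernel: "inj_on (cocycle A m k) {x. P m x = 0}"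
proof (induction k)
  case (Suc k)
  have "inj_on (A (m + int k)) (cocycle A m k ` {x. P m x = 0})"
    by (rule inj_on_subset[OF bij_betw_imp_inj_on[OF A_kernel_bij]]) (auto intro: cocycle_kernel)
  with Suc show ?case using comp_inj_on by (fastforce simp: comp_def)
qed simp

lemma evol_P: "m \<le> n \<Longrightarrow> evol A n m (P m x) = green m x n"
  unfolding P_def by (rule evol_trajectory) (auto intro: green_step)

lemma evol_inverse_complement:
  assumes "n \<le> m"
  shows "the_inv_into {y. P n y = 0} (evol A m n) (x - P m x) = backward m (x - P m x) n"
proof (rule the_inv_into_f_eq)
  show "inj_on (evol A m n) {y. P n y = 0}"
    unfolding evol_def by (rule cocycle_inj_on_kernel)
  have "evol A m n (backward m (x - P m x) n) = backward m (x - P m x) m"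
    using assms by (intro evol_trajectory) (auto intro: backward_step)
  then show "evol A m n (backward m (x - P m x) n) = x - P m x"
    by (simp add: backward_at P_complement)
  show "backward m (x - P m x) n \<in> {y. P n y = 0}"
    using P_backward assms by simp
qed

section \<open>Exponential decay\<close>

lemma perron_estimate:
  assumes x: "x \<in> Y" "T x \<in> Y" and I: "finite I" "I \<noteq> {}"
    and "0 \<le> \<gamma>" "0 < \<mu>" "0 \<le> \<beta>"
    and lower: "\<And>j. j \<in> I \<Longrightarrow> \<gamma> \<le> \<mu> * nr j (x j)"
    and upper: "\<And>j. nr j (T x j) \<le> \<beta> * indicator I (j + s)"
  shows "\<gamma> \<le> \<mu> * K * N * \<beta>"
proof -
  let ?c = "indicator I :: int \<Rightarrow> real"
  have c: "?c \<in> Bs" "nB ?c > 0" using indicator_finite_mem indicator_finite_pos I by auto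
  have "\<bar>(\<gamma> / \<mu>) * ?c j\<bar> \<le> \<bar>nr j (x j)\<bar>" for j
    using lower[of j] assms(5,6) by (cases "j \<in> I") (simp_all add: field_simps)
  then have "nB (\<lambda>j. (\<gamma> / \<mu>) * ?c j) \<le> ny x"
    using B_dominated[of "\<lambda>n. nr n (x n)"] x(1) by (simp add: Y_iff Y_B_norm_def)
  then have "(\<gamma> / \<mu>) * nB ?c \<le> ny x"
    using B.norm_scale[OF c(1), of "\<gamma> / \<mu>"] assms(5,6) by simp
  also have "\<dots> \<le> K * ny (T x)" using T_inverse_bound x by blast
  also have "ny (T x) \<le> \<beta> * (N * nB ?c)"
  proof -
    have shifted: "(\<lambda>j. ?c (j + s)) \<in> Bs" "nB (\<lambda>j. ?c (j + s)) \<le> N * nB ?c"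
      using shift[OF c(1)] by auto
    have "\<bar>nr j (T x j)\<bar> \<le> \<bar>\<beta> * ?c (j + s)\<bar>" for j
      using upper[of j] assms(7) by simp
    then have "ny (T x) \<le> nB (\<lambda>j. \<beta> * ?c (j + s))"
      using B_dominated B.scale_mem[OF shifted(1), of \<beta>] by (simp add: Y_B_norm_def)
    also have "\<dots> \<le> \<beta> * (N * nB ?c)"
      using B.norm_scale[OF shifted(1), of \<beta>] shifted(2) assms(7) by (simp add: mult_left_mono)
    finally show ?thesis .
  qed
  then have "K * ny (T x) \<le> K * (\<beta> * (N * nB ?c))"
    using K_ge_1 by (intro mult_left_mono) auto
  finally have "(\<gamma> / \<mu>) * nB ?c \<le> (K * \<beta> * N) * nB ?c" by (simp add: ac_simps)
  then have "\<gamma> / \<mu> \<le> K * \<beta> * N" using c(2) by (rule mult_right_le_imp_le)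
  then show ?thesis using assms(6) by (simp add: field_simps)
qed

lemma T_ramp:
  assumes "\<And>j. \<phi> (j - 1) \<noteq> 0 \<Longrightarrow> u j = A (j - 1) (u (j - 1))"
  shows "T (\<lambda>j. \<phi> j *\<^sub>R u j) = (\<lambda>j. (\<phi> j - \<phi> (j - 1)) *\<^sub>R u j)"
proof
  fix j show "T (\<lambda>j. \<phi> j *\<^sub>R u j) j = (\<phi> j - \<phi> (j - 1)) *\<^sub>R u j"
    using assms[of j]
    by (cases "\<phi> (j - 1) = 0") (simp_all add: T_apply linear_scale[OF A_linear] scaleR_diff_left)
qed

text \<open>Perron's trick: if \<open>\<phi>\<close> rises by at most one per step and equals \<open>L\<close> on the window \<open>I\<close>,
  then \<open>\<phi> u\<close> lies in the domain of \<open>T_B\<close> and its image \<open>(\<Delta>\<phi>) u\<close> lives on the rise, which is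
  \<open>I\<close> shifted by \<open>s\<close>.\<close>

lemma ramp_estimate:
  assumes u: "u \<in> Y" and step: "\<And>j. \<phi> (j - 1) \<noteq> 0 \<Longrightarrow> u j = A (j - 1) (u (j - 1))"
    and \<phi>: "\<And>j. 0 \<le> \<phi> j" "\<And>j. \<phi> j \<le> L"
    and I: "finite I" "I \<noteq> {}" "\<And>j. j \<in> I \<Longrightarrow> \<phi> j = L"
    and slope: "\<And>j. \<bar>\<phi> j - \<phi> (j - 1)\<bar> \<le> indicator I (j + s)"
    and "0 \<le> \<gamma>" "0 < \<mu>" "0 \<le> \<beta>"
    and lower: "\<And>j. j \<in> I \<Longrightarrow> \<gamma> \<le> \<mu> * nr j (u j)"
    and upper: "\<And>j. j + s \<in> I \<Longrightarrow> nr j (u j) \<le> \<beta>"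
  shows "L * \<gamma> \<le> \<mu> * K * N * \<beta>"
proof (rule perron_estimate)
  have Tx: "T (\<lambda>j. \<phi> j *\<^sub>R u j) = (\<lambda>j. (\<phi> j - \<phi> (j - 1)) *\<^sub>R u j)"
    using step by (rule T_ramp)
  have "0 \<le> L" using \<phi>[of 0] by linarith
  then show "(\<lambda>j. \<phi> j *\<^sub>R u j) \<in> Y"
    using Y_dominated[OF u, of L] \<phi> by (simp add: nr_scale mult_right_mono)
  have "\<bar>\<phi> j - \<phi> (j - 1)\<bar> \<le> 1" for j
    using order_trans[OF slope[of j], of 1] by (simp add: indicator_def)
  then show "T (\<lambda>j. \<phi> j *\<^sub>R u j) \<in> Y"
    unfolding Tx by (intro Y_dominated[OF u, of 1, THEN conjunct1]) (auto simp: nr_scale intro!: mult_left_le_one_le)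
  show "L * \<gamma> \<le> \<mu> * nr j (\<phi> j *\<^sub>R u j)" if "j \<in> I" for j
    using mult_left_mono[OF lower[OF that] \<open>0 \<le> L\<close>] I(3)[OF that] \<open>0 \<le> L\<close>
    by (simp add: nr_scale ac_simps)
  show "nr j (T (\<lambda>j. \<phi> j *\<^sub>R u j) j) \<le> \<beta> * indicator I (j + s)" for j
    using slope[of j] upper[of j] mult_mono[OF slope[of j] upper[of j]] \<open>0 \<le> \<beta>\<close>
    by (cases "j + s \<in> I") (simp_all add: Tx nr_scale ac_simps)
qed (use I assms(9-11) order_trans[OF \<phi>] in \<open>auto intro: mult_nonneg_nonneg\<close>)

lemma green_decay:
  assumes "m \<le> k" "0 < L"
  shows "real L * nr (k + 2 * int L) (green m v (k + 2 * int L)) \<le> M * K * N * (M * nr k (green m v k))"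
proof (rule ramp_estimate[OF green_mem, where \<phi> = "\<lambda>j. of_int (min (max (j - k) 0) (int L))"
      and I = "{k + int L<..k + 2 * int L}" and s = "int L"])
  show "green m v j = A (j - 1) (green m v (j - 1))"
    if "real_of_int (min (max (j - 1 - k) 0) (int L)) \<noteq> 0" for j
    using that assms by (intro green_step) auto
  show "\<bar>real_of_int (min (max (j - k) 0) (int L)) - real_of_int (min (max (j - 1 - k) 0) (int L))\<bar>
      \<le> indicator {k + int L<..k + 2 * int L} (j + int L)" for j
    by (auto simp: indicator_def)
  show "nr (k + 2 * int L) (green m v (k + 2 * int L)) \<le> M * nr j (green m v j)"
    if "j \<in> {k + int L<..k + 2 * int L}" for j
    using that assms by (intro green_mono) auto
  show "nr j (green m v j) \<le> M * nr k (green m v k)" if "j + int L \<in> {k + int L<..k + 2 * int L}" for j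
    using that assms by (intro green_mono) auto
qed (use assms M_ge_1 in auto)

lemma backward_decay:
  assumes "k \<le> m" "0 < L"
  shows "real L * nr (k - 2 * int L) (backward m w (k - 2 * int L))
    \<le> M * K * N * (M * nr k (backward m w k))"
proof (rule ramp_estimate[OF backward_mem, where \<phi> = "\<lambda>j. of_int (min (max (k - j) 0) (int L))"
      and I = "{k - 2 * int L<..k - int L}" and s = "- int L"])
  show "backward m w j = A (j - 1) (backward m w (j - 1))"
    if "real_of_int (min (max (k - (j - 1)) 0) (int L)) \<noteq> 0" for j
    using that assms by (intro backward_step) auto
  show "\<bar>real_of_int (min (max (k - j) 0) (int L)) - real_of_int (min (max (k - (j - 1)) 0) (int L))\<bar>
      \<le> indicator {k - 2 * int L<..k - int L} (j + - int L)" for j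
    by (auto simp: indicator_def)
  show "nr (k - 2 * int L) (backward m w (k - 2 * int L)) \<le> M * nr j (backward m w j)"
    if "j \<in> {k - 2 * int L<..k - int L}" for j
    using that assms by (intro backward_mono) auto
  show "nr j (backward m w j) \<le> M * nr k (backward m w k)" if "j + - int L \<in> {k - 2 * int L<..k - int L}" for j
    using that assms by (intro backward_mono) auto
qed (use assms M_ge_1 in auto)

definition ramp_length :: nat where
  "ramp_length = nat \<lceil>2 * K * N * M * M\<rceil> + 1"

lemma ramp_length: "0 < ramp_length" "2 * K * N * M * M \<le> real ramp_length"
  unfolding ramp_length_def by linarith+

definition decay_rate :: real where
  "decay_rate = root (2 * ramp_length) (1/2)"

lemma decay_rate: "0 < decay_rate" "decay_rate < 1"
  using ramp_length(1) by (auto simp: decay_rate_def real_root_gt_zero)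

lemma halving_of_ramp_estimate:
  assumes "0 \<le> a" "real ramp_length * b \<le> M * K * N * (M * a)"
  shows "b \<le> a / 2"
proof -
  have "real ramp_length * b \<le> (2 * K * N * M * M) * (a / 2)" using assms(2) by (simp add: ac_simps)
  also have "\<dots> \<le> real ramp_length * (a / 2)"
    using ramp_length(2) assms(1) by (intro mult_right_mono) auto
  finally show ?thesis using ramp_length(1) by simp
qed

lemma green_exponential_decay:
  assumes "m \<le> n"
  shows "nr n (green m v n) \<le> 2 * M * decay_rate ^ nat (n - m) * nr m (green m v m)"
proof -
  define a where "a i = nr (m + int i) (green m v (m + int i))" for i
  have "a i \<le> 2 * M * root (2 * ramp_length) (1/2) ^ i * a 0" for i
  proof (rule halving_exponential_decay)
    show "a (i + 2 * ramp_length) \<le> a i / 2" for i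
      using halving_of_ramp_estimate[OF nr_nonneg green_decay[OF _ ramp_length(1), of m "m + int i"]]
      by (simp add: a_def add.assoc)
    show "a (i + j) \<le> M * a i" for i j
      unfolding a_def by (intro green_mono) auto
  qed (use ramp_length M_ge_1 in \<open>simp_all add: a_def\<close>)
  from this[of "nat (n - m)"] show ?thesis
    using assms by (simp add: a_def decay_rate_def)
qed

lemma backward_exponential_decay:
  assumes "n \<le> m"
  shows "nr n (backward m w n) \<le> 2 * M * decay_rate ^ nat (m - n) * nr m (backward m w m)"
proof -
  define a where "a i = nr (m - int i) (backward m w (m - int i))" for i
  have "a i \<le> 2 * M * root (2 * ramp_length) (1/2) ^ i * a 0" for i
  proof (rule halving_exponential_decay)
    show "a (i + 2 * ramp_length) \<le> a i / 2" for i
      using halving_of_ramp_estimate[OF nr_nonneg backward_decay[OF _ ramp_length(1), of "m - int i" m w]]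
      by (simp add: a_def algebra_simps)
    show "a (i + j) \<le> M * a i" for i j
      unfolding a_def by (intro backward_mono) auto
  qed (use ramp_length M_ge_1 in \<open>simp_all add: a_def\<close>)
  from this[of "nat (m - n)"] show ?thesis
    using assms by (simp add: a_def decay_rate_def)
qed

lemma nr_complement_le: "nr m (x - P m x) \<le> M * nr m x"
proof -
  have "nr m (x - P m x) \<le> nr m x + K * N * N * nr m x"
    using nr_triangle[of m x "- P m x"] nr_P_le[of m x] by simp
  then show ?thesis by (simp add: M_def algebra_simps)
qed

lemma stable_estimate:
  assumes "m \<le> n"
  shows "nr n (evol A n m (P m x)) \<le> 2 * M * M * decay_rate ^ nat (n - m) * nr m x"
proof -
  have "nr n (evol A n m (P m x)) \<le> 2 * M * decay_rate ^ nat (n - m) * nr m (P m x)"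
    using green_exponential_decay[OF assms, of x] by (simp add: evol_P[OF assms] flip: P_def)
  also have "\<dots> \<le> 2 * M * decay_rate ^ nat (n - m) * (M * nr m x)"
    using nr_P_le[of m x] M_ge_1 decay_rate
    by (intro mult_left_mono) (simp_all add: M_def distrib_right add_increasing)
  finally show ?thesis by (simp add: ac_simps)
qed

lemma unstable_estimate:
  assumes "n \<le> m"
  shows "nr n (the_inv_into {y. P n y = 0} (evol A m n) (x - P m x))
    \<le> 2 * M * M * inverse decay_rate powi (n - m) * nr m x"
proof -
  have "nr n (backward m (x - P m x) n) \<le> 2 * M * decay_rate ^ nat (m - n) * nr m (x - P m x)"
    using backward_exponential_decay[OF assms, of "x - P m x"] by (simp add: backward_at P_complement)
  also have "\<dots> \<le> 2 * M * decay_rate ^ nat (m - n) * (M * nr m x)"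
    using nr_complement_le M_ge_1 decay_rate by (intro mult_left_mono) simp_all
  also have "decay_rate ^ nat (m - n) = inverse decay_rate powi (n - m)"
    using assms by (simp add: power_int_def power_inverse)
  finally show ?thesis
    using evol_inverse_complement[OF assms] by (simp add: ac_simps)
qed

lemma has_exp_dichotomy: "exp_dichotomy A nr"
proof -
  have "0 < 2 * M * M" "1 < inverse decay_rate"
    using M_ge_1 decay_rate by (simp_all add: one_less_inverse)
  with stable_estimate unstable_estimate decay_rate
  have "\<exists>D>0. \<exists>la mu::real. 0 < la \<and> la < 1 \<and> 1 < mu \<and>
      (\<forall>n m x. n \<ge> m \<longrightarrow> nr n (evol A n m (P m x)) \<le> D * la ^ nat (n - m) * nr m x) \<and>
      (\<forall>n m x. n \<le> m \<longrightarrow> nr n (the_inv_into {y. P n y = 0} (evol A m n) (x - P m x))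
        \<le> D * mu powi (n - m) * nr m x)"
    by blast
  then show ?thesis
    unfolding exp_dichotomy_def using P_bounded_linear P_idem A_P A_kernel_bij
    by (intro exI[of _ P] conjI allI) (auto simp: fun_eq_iff)
qed

end

theorem theorem3p4:
  fixes Bs :: "(int \<Rightarrow> real) set" and nB :: "(int \<Rightarrow> real) \<Rightarrow> real"
    and nr :: "int \<Rightarrow> 'a::banach \<Rightarrow> real"
    and A :: "int \<Rightarrow> 'a \<Rightarrow> 'a"
  assumes "banach_seq_space Bs nB"
    and "admissible Bs nB"
    and "\<forall>m. is_norm (nr m) \<and> equiv_to_norm (nr m)"
    and "\<forall>m. bounded_linear (A m)"
    and "bij_betw (T_B A) (dom_T_B Bs nr A) (Y_B Bs nr)"
  shows "exp_dichotomy A nr"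
proof -
  obtain N where N: "N > 0" "\<forall>s\<in>Bs. \<forall>m. (\<lambda>n. s (n + m)) \<in> Bs \<and> nB (\<lambda>n. s (n + m)) \<le> N * nB s"
    using assms(2) by (auto simp: admissible_def)
  interpret bijective_difference_operator Bs nB N nr A
    by (intro bijective_difference_operator.intro weighted_seq_space.intro
        admissible_seq_space.intro weighted_seq_space_axioms.intro
        bijective_difference_operator_axioms.intro)
      (use assms N in \<open>auto simp: admissible_def\<close>)
  obtain K where "1 \<le> K" "\<And>x. x \<in> Y \<Longrightarrow> T x \<in> Y \<Longrightarrow> ny x \<le> K * ny (T x)"
    using T_inverse_bounded by blast
  then interpret bounded_inverse_difference_operator Bs nB N nr A K
    by unfold_locales
  show ?thesis by (rule has_exp_dichotomy)
qed

end
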